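(* Let $m\ge2$ and $t\ge1$ be integers, and let $f$ be the two-digit base-$m$ Kaprekar map on $X=\{0,\dots,m^2-1\}$. There exists $x\in X$ with $K(x)\neq\{0\}$ and $T(x)=t$ if and only if there exists an integer $d>1$ with $d\mid m+1$ such that $t$ is the least positive integer satisfying $d\mid 2^t+1$ or $d\mid 2^t-1$.
   Context: For an integer $m\ge2$, $X=\{0,1,\dots,m^2-1\}$, each element written with exactly two base-$m$ digits (leading zeros allowed); $f(x)=D(x)-A(x)$ where $D(x)$ (resp. $A(x)$) has the digits of $x$ in nonincreasing (resp. nondecreasing) order. The step $S(x)$ is the least $s\ge0$ such that $f^{s+t}(x)=f^s(x)$ for some $t\ge1$; the minimal period $T(x)$ is the least $t\ge1$ with $f^{S(x)+t}(x)=f^{S(x)}(x)$; the fixed set of $x$ is $K(x)=\{f^{S(x)+i}(x):0\le i<T(x)\}$. *)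

theory Defs
  imports Main
begin

definition kapD :: "nat \<Rightarrow> nat \<Rightarrow> nat" where
  "kapD m x = max (x div m) (x mod m) * m + min (x div m) (x mod m)"

definition kapA :: "nat \<Rightarrow> nat \<Rightarrow> nat" where
  "kapA m x = min (x div m) (x mod m) * m + max (x div m) (x mod m)"

definition kap :: "nat \<Rightarrow> nat \<Rightarrow> nat" where
  "kap m x = kapD m x - kapA m x"

definition kstep :: "nat \<Rightarrow> nat \<Rightarrow> nat" where
  "kstep m x = (LEAST s. \<exists>t\<ge>1. (kap m ^^ (s + t)) x = (kap m ^^ s) x)"

definition kperiod :: "nat \<Rightarrow> nat \<Rightarrow> nat" where
  "kperiod m x = (LEAST t. t \<ge> 1 \<and> (kap m ^^ (kstep m x + t)) x = (kap m ^^ kstep m x) x)"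

definition kfixed :: "nat \<Rightarrow> nat \<Rightarrow> nat set" where
  "kfixed m x = {(kap m ^^ (kstep m x + i)) x | i. i < kperiod m x}"

end

theory Submission
  imports Defs "HOL-Number_Theory.Cong"
begin

(* Every value of f is a multiple k (m - 1) with 0 <= k < m, and on these multiples f acts by
   k |-> |m + 1 - 2k|, which is doubling modulo m + 1 up to sign. Hence a nonzero point
   k (m - 1) on a cycle returns after t steps iff 2^t k == +-k (mod m + 1), i.e. iff
   d = (m + 1) / gcd(k, m + 1) > 1 divides 2^t - 1 or 2^t + 1. Conversely, for an odd divisor
   d > 1 of m + 1 the orbit of (m + 1) / d under the doubling map reaches a cycle, and every point
   of that cycle has gcd (m + 1) / d with m + 1 because 2 is invertible modulo d. *)

lemma Least_eq_iff:
  fixes P :: "nat \<Rightarrow> bool"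
  assumes "\<exists>n. P n"
  shows "(LEAST n. P n) = t \<longleftrightarrow> P t \<and> (\<forall>n < t. \<not> P n)"
proof
  assume "(LEAST n. P n) = t"
  then show "P t \<and> (\<forall>n < t. \<not> P n)" using LeastI_ex[OF assms] not_less_Least by blast
next
  assume "P t \<and> (\<forall>n < t. \<not> P n)"
  then show "(LEAST n. P n) = t" by (intro Least_equality) (auto simp flip: not_less)
qed

lemma funpow_eventually_periodic:
  assumes "finite A" "x \<in> A" "\<And>y. y \<in> A \<Longrightarrow> f y \<in> A"
  shows "\<exists>s p. p \<ge> 1 \<and> (f ^^ (s + p)) x = (f ^^ s) x"
proof -
  have "range (\<lambda>i. (f ^^ i) x) \<subseteq> A"
  proof safe
    show "(f ^^ i) x \<in> A" for i by (induction i) (simp_all add: assms)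
  qed
  then have "\<not> inj (\<lambda>i. (f ^^ i) x)"
    using assms(1) finite_subset infinite_UNIV_nat finite_imageD by blast
  then obtain i j where "i < j" "(f ^^ i) x = (f ^^ j) x"
    unfolding inj_def by (metis nat_neq_iff)
  then show ?thesis by (intro exI[of _ i] exI[of _ "j - i"]) simp
qed

lemma funpow_periodic_cancel:
  assumes "p \<ge> 1" "(f ^^ p) x = x" "f ((f ^^ t) x) = f x"
  shows "(f ^^ t) x = x"
proof -
  obtain q where p: "p = Suc q" using assms(1) by (cases p) auto
  have "(f ^^ t) x = (f ^^ (t + p)) x" using assms(2) by (simp add: funpow_add)
  also have "\<dots> = (f ^^ (q + Suc t)) x" by (simp add: p add.commute)
  also have "\<dots> = (f ^^ q) (f ((f ^^ t) x))" by (simp only: funpow_add comp_apply funpow.simps(2))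
  also have "\<dots> = (f ^^ p) x" using assms(3) by (simp add: p funpow_swap1)
  finally show ?thesis using assms(2) by simp
qed

lemma mult_pred_less_square:
  fixes k m :: nat
  assumes "k < m"
  shows "k * (m - 1) < m\<^sup>2"
proof -
  have "k * (m - 1) \<le> k * m" by simp
  also have "\<dots> < m * m" using assms by (simp add: mult_strict_right_mono)
  finally show ?thesis by (simp add: power2_eq_square)
qed

lemma div_gcd_gt_one:
  fixes k n :: nat
  assumes "0 < k" "k < n"
  shows "1 < n div gcd k n"
proof (rule ccontr)
  assume "\<not> 1 < n div gcd k n"
  then have "gcd k n * (n div gcd k n) \<le> gcd k n * 1" by (intro mult_le_mono2) simp
  then have "n \<le> gcd k n" by simp
  also have "gcd k n \<le> k" using assms by simp
  finally show False using assms by simp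
qed

lemma dvd_mult_iff_div_gcd_dvd:
  fixes c k n :: int
  assumes "n \<noteq> 0"
  shows "n dvd c * k \<longleftrightarrow> n div gcd k n dvd c"
proof -
  define g where "g = gcd k n"
  have "g \<noteq> 0" using assms by (simp add: g_def)
  obtain k' n' where k: "k = k' * g" and n: "n = n' * g" and "coprime k' n'"
    using gcd_coprime_exists[of k n] \<open>g \<noteq> 0\<close> unfolding g_def by blast
  have "n dvd c * k \<longleftrightarrow> n' * g dvd (c * k') * g" by (simp add: k n ac_simps)
  also have "\<dots> \<longleftrightarrow> n' dvd c"
    using \<open>g \<noteq> 0\<close> \<open>coprime k' n'\<close> by (simp add: coprime_commute coprime_dvd_mult_left_iff)
  also have "n' = n div g" using \<open>g \<noteq> 0\<close> by (simp add: n)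
  finally show ?thesis by (simp only: g_def)
qed

lemma odd_if_dvd_two_pow_pm_one:
  fixes d :: nat
  assumes "t \<ge> 1" "d dvd 2 ^ t + 1 \<or> d dvd 2 ^ t - 1"
  shows "odd d"
proof -
  have "odd ((2::nat) ^ t + 1)" "odd ((2::nat) ^ t - 1)"
    using assms(1) by simp_all
  then show ?thesis using assms(2) by (meson dvd_trans)
qed

definition cong_pm :: "int \<Rightarrow> int \<Rightarrow> int \<Rightarrow> bool" where
  "cong_pm a b n \<longleftrightarrow> n dvd a - b \<or> n dvd a + b"

lemma cong_pm_sym: "cong_pm a b n \<Longrightarrow> cong_pm b a n"
  by (auto simp: cong_pm_def dvd_diff_commute add.commute)

lemma cong_pm_trans [trans]:
  assumes "cong_pm a b n" "cong_pm b c n"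
  shows "cong_pm a c n"
proof -
  have "a - c = (a - b) + (b - c)" "a - c = (a + b) - (b + c)"
    "a + c = (a - b) + (b + c)" "a + c = (a + b) - (b - c)" by simp_all
  then show ?thesis using assms unfolding cong_pm_def by (metis dvd_add dvd_diff)
qed

lemma cong_pm_mult_left: "cong_pm a b n \<Longrightarrow> cong_pm (c * a) (c * b) n"
  by (auto simp: cong_pm_def simp flip: right_diff_distrib distrib_left)

lemma cong_pm_gcd_eq: "cong_pm a b n \<Longrightarrow> gcd a n = gcd b n"
  unfolding cong_pm_def
  using cong_gcd_eq[of a b n] cong_gcd_eq[of a "- b" n] by (auto simp: cong_iff_dvd_diff)

lemma cong_pm_less_imp_eq_or_add_eq:
  assumes "0 \<le> a" "a < n" "0 \<le> b" "b < n" "cong_pm a b n"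
  shows "a = b \<or> a + b = n"
  using assms(5) unfolding cong_pm_def
proof
  assume "n dvd a - b"
  then show ?thesis using cong_less_imp_eq_int[OF assms(1-4)] by (simp add: cong_iff_dvd_diff)
next
  assume "n dvd a + b"
  then obtain q where q: "a + b = n * q" by (elim dvdE)
  have "0 < n" using assms by linarith
  have "0 \<le> n * q" "n * q < n * 2" using assms q by linarith+
  then have "0 \<le> q" "q < 2"
    using \<open>0 < n\<close> by (auto simp: zero_le_mult_iff mult_less_cancel_left_pos)
  then have "q = 0 \<or> q = 1" by linarith
  then have "a + b = 0 \<or> a + b = n" using q by auto
  then show ?thesis
  proof
    assume "a + b = 0"
    then have "a = b" using assms(1,3) by linarith
    then show ?thesis ..
  qed simp
qed

lemma cong_pm_mult_cancel:
  fixes c k n :: int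
  assumes "n \<noteq> 0"
  shows "cong_pm (c * k) k n \<longleftrightarrow> cong_pm c 1 (n div gcd k n)"
proof -
  have "c * k - k = (c - 1) * k" "c * k + k = (c + 1) * k" by (simp_all add: algebra_simps)
  then show ?thesis
    unfolding cong_pm_def by (simp add: dvd_mult_iff_div_gcd_dvd[OF assms])
qed

lemma dvd_two_pow_pm_one_iff:
  "(d dvd 2 ^ t + 1 \<or> d dvd 2 ^ t - 1) \<longleftrightarrow> cong_pm (2 ^ t) 1 (int d)"
proof -
  have "int (2 ^ t - 1) = 2 ^ t - 1" by simp
  then show ?thesis unfolding cong_pm_def by (auto simp flip: int_dvd_int_iff simp: add.commute)
qed

lemma kap_eq_digit_diff: "kap m x = (max (x div m) (x mod m) - min (x div m) (x mod m)) * (m - 1)"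
proof -
  define a where "a = max (x div m) (x mod m)"
  define b where "b = min (x div m) (x mod m)"
  have "b \<le> a" by (simp add: a_def b_def)
  then obtain c where c: "a = b + c" using le_Suc_ex by blast
  have "kap m x = (a * m + b) - (b * m + a)" by (simp add: kap_def kapD_def kapA_def a_def b_def)
  also have "\<dots> = (a - b) * (m - 1)" by (cases m) (simp_all add: c algebra_simps)
  finally show ?thesis by (simp only: a_def b_def)
qed

lemma kap_zero: "kap m 0 = 0"
  by (simp add: kap_def kapD_def kapA_def)

lemma funpow_kap_zero: "(kap m ^^ i) 0 = 0"
  by (induction i) (simp_all add: kap_zero)

lemma kap_eq_mult:
  assumes "x < m\<^sup>2"
  obtains k where "k < m" "kap m x = k * (m - 1)"
proof
  have "0 < m" using assms by (cases m) simp_all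
  then have "x div m < m" "x mod m < m"
    using assms by (simp_all add: power2_eq_square less_mult_imp_div_less)
  then show "max (x div m) (x mod m) - min (x div m) (x mod m) < m" by linarith
qed (rule kap_eq_digit_diff)

lemma kap_less: "x < m\<^sup>2 \<Longrightarrow> kap m x < m\<^sup>2"
  by (metis kap_eq_mult mult_pred_less_square)

lemma funpow_kap_less: "x < m\<^sup>2 \<Longrightarrow> (kap m ^^ i) x < m\<^sup>2"
  by (induction i) (simp_all add: kap_less)

lemma kap_periodic_point_eq_mult:
  assumes "y < m\<^sup>2" "t \<ge> 1" "(kap m ^^ t) y = y"
  obtains k where "k < m" "y = k * (m - 1)"
proof -
  have "y = kap m ((kap m ^^ (t - 1)) y)"
    using assms(2,3) by (metis Suc_diff_le diff_Suc_1 funpow.simps(2) o_apply)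
  moreover have "(kap m ^^ (t - 1)) y < m\<^sup>2" using assms(1) by (rule funpow_kap_less)
  ultimately show ?thesis using that kap_eq_mult by metis
qed

(* For k > 0 the base-m digits of k (m - 1) are k - 1 and m - k; kcoeff m k is their difference. *)
definition kcoeff :: "nat \<Rightarrow> nat \<Rightarrow> nat" where
  "kcoeff m k =
    (if k = 0 then 0 else if 2 * k \<le> m + 1 then m + 1 - 2 * k else 2 * k - (m + 1))"

lemma kap_mult_eq_kcoeff:
  assumes "k < m"
  shows "kap m (k * (m - 1)) = kcoeff m k * (m - 1)"
proof (cases "k = 0")
  case True
  then show ?thesis by (simp add: kap_zero kcoeff_def)
next
  case False
  have split: "k * (m - 1) = (k - 1) * m + (m - k)"
    using assms False by (simp add: algebra_simps diff_mult_distrib diff_mult_distrib2)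
  have "m - k < m" using assms False by simp
  then have "k * (m - 1) div m = k - 1" "k * (m - 1) mod m = m - k"
    unfolding split by simp_all
  then show ?thesis using assms False by (auto simp: kap_eq_digit_diff kcoeff_def max_def min_def)
qed

lemma kcoeff_less: "k < m \<Longrightarrow> kcoeff m k < m"
  by (auto simp: kcoeff_def)

lemma funpow_kcoeff_less: "k < m \<Longrightarrow> (kcoeff m ^^ i) k < m"
  by (induction i) (simp_all add: kcoeff_less)

lemma funpow_kap_mult:
  assumes "k < m"
  shows "(kap m ^^ i) (k * (m - 1)) = (kcoeff m ^^ i) k * (m - 1)"
proof (induction i)
  case (Suc i)
  have "(kap m ^^ Suc i) (k * (m - 1)) = kap m ((kcoeff m ^^ i) k * (m - 1))"
    using Suc.IH by simp
  also have "\<dots> = kcoeff m ((kcoeff m ^^ i) k) * (m - 1)"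
    by (rule kap_mult_eq_kcoeff[OF funpow_kcoeff_less[OF assms]])
  finally show ?case by simp
qed simp

lemma funpow_kap_mult_fixed_iff:
  assumes "m \<ge> 2" "k < m"
  shows "(kap m ^^ i) (k * (m - 1)) = k * (m - 1) \<longleftrightarrow> (kcoeff m ^^ i) k = k"
  unfolding funpow_kap_mult[OF assms(2)] using assms(1) by simp

lemma kcoeff_cong_pm: "cong_pm (int (kcoeff m k)) (2 * int k) (int (m + 1))"
proof -
  consider "k = 0" | "0 < k" "2 * k \<le> m + 1" | "m + 1 < 2 * k" by linarith
  then show ?thesis
  proof cases
    case 2
    then have "int (kcoeff m k) + 2 * int k = int (m + 1)" by (simp add: kcoeff_def)
    then show ?thesis by (simp add: cong_pm_def)
  next
    case 3
    then have "int (kcoeff m k) - 2 * int k = - int (m + 1)" by (simp add: kcoeff_def)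
    then show ?thesis unfolding cong_pm_def by (metis dvd_minus_iff dvd_refl)
  qed (simp add: kcoeff_def cong_pm_def)
qed

lemma funpow_kcoeff_cong_pm: "cong_pm (int ((kcoeff m ^^ i) k)) (2 ^ i * int k) (int (m + 1))"
proof (induction i)
  case 0
  show ?case by (simp add: cong_pm_def)
next
  case (Suc i)
  have "cong_pm (int (kcoeff m ((kcoeff m ^^ i) k))) (2 * int ((kcoeff m ^^ i) k)) (int (m + 1))"
    by (rule kcoeff_cong_pm)
  also have "cong_pm (2 * int ((kcoeff m ^^ i) k)) (2 * (2 ^ i * int k)) (int (m + 1))"
    using Suc.IH by (rule cong_pm_mult_left)
  finally show ?case by (simp add: mult.assoc)
qed

lemma kcoeff_reflect: "1 \<le> k \<Longrightarrow> k \<le> m \<Longrightarrow> kcoeff m (m + 1 - k) = kcoeff m k"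
  by (auto simp: kcoeff_def)

lemma funpow_kcoeff_fixed_iff:
  assumes k: "k < m" and p: "p \<ge> 1" "(kcoeff m ^^ p) k = k"
  shows "(kcoeff m ^^ t) k = k \<longleftrightarrow> cong_pm (2 ^ t) 1 (int ((m + 1) div gcd k (m + 1)))"
proof -
  define y where "y = (kcoeff m ^^ t) k"
  have y_cong: "cong_pm (int y) (2 ^ t * int k) (int (m + 1))"
    unfolding y_def by (rule funpow_kcoeff_cong_pm)
  have "y < m" unfolding y_def using k by (rule funpow_kcoeff_less)
  have "y = k \<longleftrightarrow> cong_pm (2 ^ t * int k) (int k) (int (m + 1))"
  proof
    assume "y = k"
    then show "cong_pm (2 ^ t * int k) (int k) (int (m + 1))" using y_cong by (simp add: cong_pm_sym)
  next
    assume "cong_pm (2 ^ t * int k) (int k) (int (m + 1))"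
    with y_cong have "cong_pm (int y) (int k) (int (m + 1))" by (rule cong_pm_trans)
    then have "y = k \<or> y + k = m + 1"
      using cong_pm_less_imp_eq_or_add_eq[of "int y" "int (m + 1)" "int k"] k \<open>y < m\<close> by linarith
    then show "y = k"
    proof
      \<comment> \<open>The second solution m + 1 - k has the same image as k, so on the cycle of k it is k.\<close>
      assume "y + k = m + 1"
      then have "y = m + 1 - k" "1 \<le> k" using \<open>y < m\<close> by linarith+
      then have "kcoeff m y = kcoeff m k" using kcoeff_reflect k by simp
      then show "y = k" unfolding y_def using p by (rule funpow_periodic_cancel[rotated 2])
    qed
  qed
  also have "\<dots> \<longleftrightarrow> cong_pm (2 ^ t) 1 (int (m + 1) div gcd (int k) (int (m + 1)))"
    by (rule cong_pm_mult_cancel) simp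
  also have "int (m + 1) div gcd (int k) (int (m + 1)) = int ((m + 1) div gcd k (m + 1))"
    by (simp only: zdiv_int gcd_int_int_eq)
  finally show ?thesis unfolding y_def .
qed

lemma funpow_kap_mult_fixed_iff_cong_pm:
  assumes "m \<ge> 2" "k < m" "p \<ge> 1" "(kap m ^^ p) (k * (m - 1)) = k * (m - 1)"
  shows "(kap m ^^ i) (k * (m - 1)) = k * (m - 1) \<longleftrightarrow>
    cong_pm (2 ^ i) 1 (int ((m + 1) div gcd k (m + 1)))"
proof -
  have "(kcoeff m ^^ p) k = k" using assms(4) by (simp only: funpow_kap_mult_fixed_iff[OF assms(1,2)])
  then show ?thesis
    unfolding funpow_kap_mult_fixed_iff[OF assms(1,2)] by (rule funpow_kcoeff_fixed_iff[OF assms(2,3)])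
qed

lemma kcoeff_cycle_with_divisor:
  assumes m: "m \<ge> 2" and d: "1 < d" "odd d" "d dvd m + 1"
  obtains k p where "k < m" "p \<ge> 1" "(kcoeff m ^^ p) k = k" "(m + 1) div gcd k (m + 1) = d"
proof -
  define k0 where "k0 = (m + 1) div d"
  have m_eq: "m + 1 = d * k0" unfolding k0_def using d(3) by simp
  have "d \<ge> 3" using d(1,2) by presburger
  then have "3 * k0 \<le> m + 1" unfolding m_eq by (rule mult_le_mono1)
  then have "k0 < m" using m by linarith
  obtain s p where p: "p \<ge> 1" "(kcoeff m ^^ (s + p)) k0 = (kcoeff m ^^ s) k0"
    using funpow_eventually_periodic[of "{..<m}" k0 "kcoeff m"] \<open>k0 < m\<close> kcoeff_less by auto
  define k where "k = (kcoeff m ^^ s) k0"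
  have "(kcoeff m ^^ p) k = k"
    using p(2) unfolding k_def by (simp add: funpow_add add.commute)
  moreover have "k < m" unfolding k_def using \<open>k0 < m\<close> by (rule funpow_kcoeff_less)
  moreover have "gcd k (m + 1) = k0"
  proof -
    have "int (gcd k (m + 1)) = gcd (int k) (int (m + 1))" by (simp only: gcd_int_int_eq)
    also have "\<dots> = gcd (2 ^ s * int k0) (int (m + 1))"
      unfolding k_def by (rule cong_pm_gcd_eq[OF funpow_kcoeff_cong_pm])
    also have "\<dots> = gcd (int (k0 * 2 ^ s)) (int (k0 * d))" unfolding m_eq by (simp add: ac_simps)
    also have "\<dots> = int (gcd (k0 * 2 ^ s) (k0 * d))" by (simp only: gcd_int_int_eq)
    also have "gcd (k0 * 2 ^ s) (k0 * d) = k0"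
      using d(2) by (simp flip: gcd_mult_distrib_nat)
    finally show ?thesis by simp
  qed
  moreover have "(m + 1) div k0 = d"
    using m_eq by (metis add_is_0 mult_0_right nonzero_mult_div_cancel_right one_neq_zero)
  ultimately show ?thesis using that p(1) by simp
qed

definition kentry :: "nat \<Rightarrow> nat \<Rightarrow> nat" where
  "kentry m x = (kap m ^^ kstep m x) x"

lemma funpow_kstep_add: "(kap m ^^ (kstep m x + i)) x = (kap m ^^ i) (kentry m x)"
  by (simp add: kentry_def funpow_add add.commute)

lemma kentry_less: "x < m\<^sup>2 \<Longrightarrow> kentry m x < m\<^sup>2"
  by (simp add: kentry_def funpow_kap_less)

lemma kentry_periodic: "x < m\<^sup>2 \<Longrightarrow> \<exists>p \<ge> 1. (kap m ^^ p) (kentry m x) = kentry m x"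
proof -
  assume "x < m\<^sup>2"
  then have "\<exists>s p. p \<ge> 1 \<and> (kap m ^^ (s + p)) x = (kap m ^^ s) x"
    by (intro funpow_eventually_periodic[of "{..<m\<^sup>2}"]) (simp_all add: kap_less)
  then have "\<exists>p \<ge> 1. (kap m ^^ (kstep m x + p)) x = (kap m ^^ kstep m x) x"
    unfolding kstep_def by (rule LeastI_ex)
  then show ?thesis by (simp add: funpow_kstep_add kentry_def)
qed

lemma kstep_eq_0_if_periodic: "p \<ge> 1 \<Longrightarrow> (kap m ^^ p) x = x \<Longrightarrow> kstep m x = 0"
  unfolding kstep_def by (rule Least_eq_0) auto

lemma kperiod_eq_iff:
  assumes "x < m\<^sup>2"
  shows "kperiod m x = t \<longleftrightarrow> t \<ge> 1 \<and> (kap m ^^ t) (kentry m x) = kentry m x \<and>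
    (\<forall>t'. 0 < t' \<and> t' < t \<longrightarrow> (kap m ^^ t') (kentry m x) \<noteq> kentry m x)"
proof -
  define P where "P t \<longleftrightarrow> t \<ge> 1 \<and> (kap m ^^ t) (kentry m x) = kentry m x" for t
  have "kperiod m x = (LEAST t. P t)"
    by (simp only: kperiod_def funpow_kstep_add P_def flip: kentry_def)
  moreover have "\<exists>t. P t" using kentry_periodic[OF assms] by (simp add: P_def)
  then have "(LEAST t. P t) = t \<longleftrightarrow> P t \<and> (\<forall>t' < t. \<not> P t')" by (rule Least_eq_iff)
  ultimately show ?thesis by (auto simp: P_def)
qed

lemma kfixed_eq_zero_iff:
  assumes "x < m\<^sup>2"
  shows "kfixed m x = {0} \<longleftrightarrow> kentry m x = 0"
proof
  have "kperiod m x \<ge> 1" using kperiod_eq_iff[OF assms] by blast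
  have kfixed_eq: "kfixed m x = {(kap m ^^ i) (kentry m x) | i. i < kperiod m x}"
    by (simp add: kfixed_def funpow_kstep_add)
  have "kentry m x \<in> kfixed m x"
    unfolding kfixed_eq using \<open>kperiod m x \<ge> 1\<close> by (intro CollectI exI[of _ 0]) simp
  then show "kfixed m x = {0} \<Longrightarrow> kentry m x = 0" by simp
  show "kentry m x = 0 \<Longrightarrow> kfixed m x = {0}"
    using \<open>kentry m x \<in> kfixed m x\<close> unfolding kfixed_eq by (auto simp: funpow_kap_zero)
qed

lemma kap_cycle_return_divisor:
  assumes m: "m \<ge> 2" and x: "x < m\<^sup>2" "kentry m x \<noteq> 0"
  shows "\<exists>d > 1. d dvd m + 1 \<and>
    (\<forall>i. (kap m ^^ i) (kentry m x) = kentry m x \<longleftrightarrow> cong_pm (2 ^ i) 1 (int d))"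
proof -
  obtain p where p: "p \<ge> 1" "(kap m ^^ p) (kentry m x) = kentry m x"
    using kentry_periodic[OF x(1)] by blast
  then obtain k where k: "k < m" and y: "kentry m x = k * (m - 1)"
    using kap_periodic_point_eq_mult[OF kentry_less[OF x(1)]] by blast
  define d where "d = (m + 1) div gcd k (m + 1)"
  have "(kap m ^^ i) (kentry m x) = kentry m x \<longleftrightarrow> cong_pm (2 ^ i) 1 (int d)" for i
    using funpow_kap_mult_fixed_iff_cong_pm[OF m k p(1)] p(2) unfolding y d_def by blast
  moreover have "1 < d" unfolding d_def using x(2) y k by (intro div_gcd_gt_one) auto
  moreover have "d dvd m + 1"
    using dvd_div_mult_self[OF gcd_dvd2[of k "m + 1"]] unfolding d_def by (metis dvd_triv_left)
  ultimately show ?thesis by blast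
qed

lemma kap_cycle_of_divisor:
  assumes m: "m \<ge> 2" and d: "1 < d" "odd d" "d dvd m + 1"
  obtains x where "x < m\<^sup>2" "x \<noteq> 0" "kentry m x = x"
    "\<And>i. (kap m ^^ i) x = x \<longleftrightarrow> cong_pm (2 ^ i) 1 (int d)"
proof -
  obtain k p where k: "k < m" "p \<ge> 1" "(kcoeff m ^^ p) k = k" "(m + 1) div gcd k (m + 1) = d"
    using kcoeff_cycle_with_divisor[OF m d] by blast
  define x where "x = k * (m - 1)"
  have periodic: "(kap m ^^ p) x = x"
    unfolding x_def funpow_kap_mult_fixed_iff[OF m k(1)] by (rule k(3))
  have "(kap m ^^ i) x = x \<longleftrightarrow> cong_pm (2 ^ i) 1 (int d)" for i
    using funpow_kap_mult_fixed_iff_cong_pm[OF m k(1,2)] periodic unfolding x_def k(4) by blast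
  moreover have "x < m\<^sup>2" unfolding x_def using k(1) by (rule mult_pred_less_square)
  moreover have "kentry m x = x"
    using kstep_eq_0_if_periodic[OF k(2) periodic] by (simp add: kentry_def)
  moreover have "k \<noteq> 0"
  proof
    assume "k = 0"
    with k(4) d(1) show False by simp
  qed
  then have "x \<noteq> 0" unfolding x_def using m by simp
  ultimately show ?thesis using that by blast
qed

theorem theorem3p3p3:
  fixes m t :: nat
  assumes "m \<ge> 2" and "t \<ge> 1"
  shows "(\<exists>x < m^2. kfixed m x \<noteq> {0} \<and> kperiod m x = t) \<longleftrightarrow>
    (\<exists>d::nat. d > 1 \<and> d dvd m + 1 \<and>
       (d dvd 2^t + 1 \<or> d dvd 2^t - 1) \<and>
       (\<forall>t'. 0 < t' \<and> t' < t \<longrightarrow> \<not> (d dvd 2^t' + 1 \<or> d dvd 2^t' - 1)))"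
  unfolding dvd_two_pow_pm_one_iff
proof
  assume "\<exists>x < m^2. kfixed m x \<noteq> {0} \<and> kperiod m x = t"
  then obtain x where x: "x < m\<^sup>2" "kentry m x \<noteq> 0" "kperiod m x = t"
    using kfixed_eq_zero_iff by blast
  then obtain d where "1 < d" "d dvd m + 1"
    and "\<forall>i. (kap m ^^ i) (kentry m x) = kentry m x \<longleftrightarrow> cong_pm (2 ^ i) 1 (int d)"
    using kap_cycle_return_divisor[OF assms(1)] by blast
  with x show "\<exists>d>1. d dvd m + 1 \<and> cong_pm (2 ^ t) 1 (int d) \<and>
      (\<forall>t'. 0 < t' \<and> t' < t \<longrightarrow> \<not> cong_pm (2 ^ t') 1 (int d))"
    using kperiod_eq_iff by blast
next
  assume "\<exists>d>1. d dvd m + 1 \<and> cong_pm (2 ^ t) 1 (int d) \<and>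
      (\<forall>t'. 0 < t' \<and> t' < t \<longrightarrow> \<not> cong_pm (2 ^ t') 1 (int d))"
  then obtain d where d: "1 < d" "d dvd m + 1" "cong_pm (2 ^ t) 1 (int d)"
    and minimal: "\<forall>t'. 0 < t' \<and> t' < t \<longrightarrow> \<not> cong_pm (2 ^ t') 1 (int d)" by blast
  have "odd d"
    using d(3) unfolding dvd_two_pow_pm_one_iff[symmetric] by (rule odd_if_dvd_two_pow_pm_one[OF assms(2)])
  then obtain x where x: "x < m\<^sup>2" "x \<noteq> 0" "kentry m x = x"
    and return: "\<And>i. (kap m ^^ i) x = x \<longleftrightarrow> cong_pm (2 ^ i) 1 (int d)"
    using kap_cycle_of_divisor[OF assms(1) d(1) _ d(2)] by blast
  have "kperiod m x = t"
    unfolding kperiod_eq_iff[OF x(1)] x(3) return using assms(2) d(3) minimal by blast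
  moreover have "kfixed m x \<noteq> {0}" using kfixed_eq_zero_iff[OF x(1)] x(2,3) by simp
  ultimately show "\<exists>x < m^2. kfixed m x \<noteq> {0} \<and> kperiod m x = t" using x(1) by blast
qed

end
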